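(* For every fixed integer $m\ge2$, the limit $\tau_m^{**}:=\lim_{n\to\infty}n^{m/2}\tau_{n,n-m}$ exists and $$\tau_m^{**}=2^{-m}\,|H_m(x_m')|,$$ where $H_m$ is the Hermite polynomial of degree $m$ (orthogonal with respect to $e^{-x^2}$ on $\mathbb{R}$, normalized with leading coefficient $2^m$) and $x_m'$ is the largest zero of $H_m'$, i.e. the point of the rightmost local extremum of $H_m$.
   Context: $T_n$ denotes the Chebyshev polynomial of the first kind of degree $n$, $T_n(\cos\theta)=\cos n\theta$. For integers $n\ge k+2$, $k\ge 1$, let $\omega_{n,k}$ be the rightmost (largest) zero of $T_n^{(k+1)}$ and define $\tau_{n,k}:=|T_n^{(k)}(\omega_{n,k})|/T_n^{(k)}(1)$. *)

theory Defs
  imports "HOL-Analysis.Analysis" "HOL-Computational_Algebra.Polynomial"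
begin

fun chebT :: "nat \<Rightarrow> real poly" where
  "chebT 0 = 1"
| "chebT (Suc 0) = [:0, 1:]"
| "chebT (Suc (Suc n)) = [:0, 2:] * chebT (Suc n) - chebT n"

fun hermite :: "nat \<Rightarrow> real poly" where
  "hermite 0 = 1"
| "hermite (Suc 0) = [:0, 2:]"
| "hermite (Suc (Suc n)) = [:0, 2:] * hermite (Suc n) - smult (2 * real (Suc n)) (hermite n)"

definition pder :: "nat \<Rightarrow> real poly \<Rightarrow> real poly" where
  "pder k p = (pderiv ^^ k) p"

definition cheb_omega :: "nat \<Rightarrow> nat \<Rightarrow> real" where
  "cheb_omega n k = Max {x. poly (pder (k + 1) (chebT n)) x = 0}"

definition cheb_tau :: "nat \<Rightarrow> nat \<Rightarrow> real" where
  "cheb_tau n k = \<bar>poly (pder k (chebT n)) (cheb_omega n k)\<bar> / poly (pder k (chebT n)) 1"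

definition hermite_xprime :: "nat \<Rightarrow> real" where
  "hermite_xprime m = Max {x. poly (pderiv (hermite m)) x = 0}"

end

theory Submission
  imports Defs "HOL-Real_Asymp.Real_Asymp"
begin

text \<open>
  For n > m the polynomial T_n^(n-m) has degree m. Rescaling its argument by sqrt n and normalising
  it to a monic polynomial Q_n, the two-step coefficient recurrence coming from the Chebyshev
  differential equation turns, as n tends to infinity, into the one coming from the Hermite
  differential equation; hence Q_n tends to H_m / 2^m coefficientwise. The rightmost critical point
  x_m' of H_m is simple, because H_m' and H_m'' are multiples of the consecutive Hermite polynomials
  H_(m-1) and H_(m-2), which have no common root; so the rightmost critical point of Q_n tends to
  x_m'. Finally n^(m/2) tau_(n,n-m) is the value of |Q_n| there divided by Q_n(sqrt n) / n^(m/2),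
  and this denominator tends to 1.
\<close>

section \<open>Real polynomials\<close>

lemma coeff_linear_mult: "coeff ([:0, c:] * p) i = (if i = 0 then 0 else c * coeff p (i - 1))"
  by (cases i) (simp_all add: coeff_pCons)

lemma coeff_higher_pderiv_fact:
  fixes p :: "real poly"
  shows "coeff ((pderiv ^^ k) p) i = fact (i + k) / fact i * coeff p (i + k)"
proof (induction k arbitrary: i)
  case (Suc k)
  have "coeff ((pderiv ^^ Suc k) p) i = real (Suc i) * (fact (Suc i + k) / fact (Suc i) * coeff p (Suc i + k))"
    using Suc by (simp add: coeff_pderiv)
  also have "\<dots> = fact (i + Suc k) / fact i * coeff p (i + Suc k)"
    by (simp add: fact_Suc field_simps del: of_nat_Suc)
  finally show ?case .
qed simp

lemma poly_eq_sum_atMost: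
  fixes p :: "'a::comm_semiring_1 poly"
  assumes "degree p \<le> d"
  shows "poly p x = (\<Sum>i\<le>d. coeff p i * x ^ i)"
  unfolding poly_altdef
  by (rule sum.mono_neutral_left) (use assms in \<open>auto simp: coeff_eq_0\<close>)

lemma poly_eq_0_if_zero_on_cos:
  fixes p :: "real poly"
  assumes "\<And>t. poly p (cos t) = 0"
  shows "p = 0"
proof (rule ccontr)
  assume "p \<noteq> 0"
  then have "finite {x. poly p x = 0}" by (rule poly_roots_finite)
  moreover have "{-1..1} \<subseteq> {x. poly p x = 0}"
  proof
    fix x :: real assume "x \<in> {-1..1}"
    then show "x \<in> {x. poly p x = 0}" using assms[of "arccos x"] by (simp add: cos_arccos)
  qed
  ultimately have "finite {-1..1::real}" by (rule rev_finite_subset)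
  then show False using infinite_Icc[of "-1" "1::real"] by simp
qed

lemma roots_pcompose_scale:
  fixes p :: "real poly"
  assumes "c \<noteq> 0"
  shows "{x. poly (p \<circ>\<^sub>p [:0, c:]) x = 0} = (\<lambda>x. x / c) ` {x. poly p x = 0}"
proof (intro set_eqI iffI)
  fix x assume "x \<in> {x. poly (p \<circ>\<^sub>p [:0, c:]) x = 0}"
  then show "x \<in> (\<lambda>x. x / c) ` {x. poly p x = 0}"
    using assms by (intro image_eqI[of _ _ "c * x"]) (auto simp: poly_pcompose mult.commute)
qed (use assms in \<open>auto simp: poly_pcompose\<close>)

lemma Max_roots_pcompose_scale:
  fixes p :: "real poly"
  assumes "c > 0" and "p \<noteq> 0" and "{x. poly p x = 0} \<noteq> {}"
  shows "Max {x. poly (p \<circ>\<^sub>p [:0, c:]) x = 0} = Max {x. poly p x = 0} / c"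
proof -
  have "mono (\<lambda>x. x / c)" using assms(1) by (auto simp: mono_def divide_right_mono)
  then show ?thesis
    unfolding roots_pcompose_scale[OF less_imp_neq[OF assms(1), symmetric]]
    using mono_Max_commute poly_roots_finite[OF assms(2)] assms(3) by metis
qed

lemma poly_root_above_negative:
  fixes p :: "real poly"
  assumes lc: "lead_coeff p > 0" and "poly p r < 0"
  shows "\<exists>x>r. poly p x = 0"
proof -
  obtain N where N: "\<And>x. N \<le> x \<Longrightarrow> lead_coeff p \<le> poly p x" using poly_pinfty_gt_lc[OF lc] by blast
  have "poly p (max N (r + 1)) > 0" using N[of "max N (r + 1)"] lc by simp
  moreover have "r < max N (r + 1)" by simp
  ultimately show ?thesis using poly_IVT_pos \<open>poly p r < 0\<close> by blast
qed

lemma poly_pos_right_of_roots: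
  fixes p :: "real poly"
  assumes lc: "lead_coeff p > 0" and roots: "\<And>x. poly p x = 0 \<Longrightarrow> x \<le> r" and "r < y"
  shows "poly p y > 0"
proof (rule ccontr)
  assume "\<not> poly p y > 0"
  moreover have "poly p y \<noteq> 0" using roots \<open>r < y\<close> by force
  ultimately obtain x where "y < x" "poly p x = 0" using poly_root_above_negative[OF lc] by force
  with roots \<open>r < y\<close> show False by force
qed

lemma pderiv_nonneg_at_max_root:
  fixes p :: "real poly"
  assumes "poly p r = 0" and pos: "\<And>y. r < y \<Longrightarrow> poly p y > 0"
  shows "poly (pderiv p) r \<ge> 0"
proof (rule ccontr)
  assume "\<not> poly (pderiv p) r \<ge> 0"
  then obtain d where "d > 0" and "\<And>h. 0 < h \<Longrightarrow> h < d \<Longrightarrow> poly p (r + h) < poly p r"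
    using DERIV_neg_dec_right[OF poly_DERIV] by (metis not_le)
  then have "poly p (r + d / 2) < 0" using assms(1) by simp
  with pos[of "r + d / 2"] \<open>d > 0\<close> show False by simp
qed

lemma poly_pos_if_top_coeff_dominates:
  fixes p :: "real poly"
  assumes "degree p \<le> Suc d" and dom: "(\<Sum>i\<le>d. \<bar>coeff p i\<bar>) < coeff p (Suc d) * y" and "1 \<le> y"
  shows "poly p y > 0"
proof -
  have "\<bar>\<Sum>i\<le>d. coeff p i * y ^ i\<bar> \<le> (\<Sum>i\<le>d. \<bar>coeff p i\<bar> * y ^ d)"
  proof (rule order_trans[OF sum_abs sum_mono])
    fix i assume "i \<in> {..d}"
    then have "y ^ i \<le> y ^ d" using \<open>1 \<le> y\<close> by (intro power_increasing) auto
    then show "\<bar>coeff p i * y ^ i\<bar> \<le> \<bar>coeff p i\<bar> * y ^ d"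
      using \<open>1 \<le> y\<close> by (simp add: abs_mult mult_left_mono)
  qed
  also have "\<dots> = (\<Sum>i\<le>d. \<bar>coeff p i\<bar>) * y ^ d" by (simp add: sum_distrib_right)
  also have "\<dots> < coeff p (Suc d) * y * y ^ d"
    using dom \<open>1 \<le> y\<close> by (intro mult_strict_right_mono) auto
  finally show ?thesis
    using poly_eq_sum_atMost[OF assms(1), of y] by (simp add: mult_ac)
qed

section \<open>Polynomials with converging coefficients\<close>

lemma tendsto_poly_coeffwise:
  fixes P :: "'a \<Rightarrow> real poly"
  assumes deg: "eventually (\<lambda>n. degree (P n) \<le> d) F" "degree p \<le> d"
    and conv: "\<And>i. ((\<lambda>n. coeff (P n) i) \<longlongrightarrow> coeff p i) F" and x: "(x \<longlongrightarrow> a) F"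
  shows "((\<lambda>n. poly (P n) (x n)) \<longlongrightarrow> poly p a) F"
proof -
  have "((\<lambda>n. \<Sum>i\<le>d. coeff (P n) i * x n ^ i) \<longlongrightarrow> (\<Sum>i\<le>d. coeff p i * a ^ i)) F"
    by (intro tendsto_intros conv x)
  moreover have "eventually (\<lambda>n. (\<Sum>i\<le>d. coeff (P n) i * x n ^ i) = poly (P n) (x n)) F"
    using deg(1) by eventually_elim (simp add: poly_eq_sum_atMost)
  ultimately show ?thesis
    using poly_eq_sum_atMost[OF deg(2)] by (simp add: tendsto_cong)
qed

lemma eventually_uniform_poly_coeffwise:
  fixes P :: "'a \<Rightarrow> real poly"
  assumes deg: "eventually (\<lambda>n. degree (P n) \<le> d) F" "degree p \<le> d"
    and conv: "\<And>i. ((\<lambda>n. coeff (P n) i) \<longlongrightarrow> coeff p i) F" and "e > 0"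
  shows "eventually (\<lambda>n. \<forall>y. \<bar>y\<bar> \<le> R \<longrightarrow> \<bar>poly (P n) y - poly p y\<bar> < e) F"
proof -
  define E where "E n = (\<Sum>i\<le>d. \<bar>coeff (P n) i - coeff p i\<bar> * \<bar>R\<bar> ^ i)" for n
  have "(E \<longlongrightarrow> (\<Sum>i\<le>d. \<bar>coeff p i - coeff p i\<bar> * \<bar>R\<bar> ^ i)) F"
    unfolding E_def by (intro tendsto_intros conv)
  then have "eventually (\<lambda>n. E n < e) F" using \<open>e > 0\<close> by (simp add: order_tendstoD(2))
  with deg(1) show ?thesis
  proof eventually_elim
    case (elim n)
    show ?case
    proof (intro allI impI)
      fix y :: real assume y: "\<bar>y\<bar> \<le> R"
      have "\<bar>poly (P n) y - poly p y\<bar> = \<bar>\<Sum>i\<le>d. (coeff (P n) i - coeff p i) * y ^ i\<bar>"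
        using elim deg(2) by (simp add: poly_eq_sum_atMost sum_subtractf left_diff_distrib)
      also have "\<dots> \<le> E n" unfolding E_def
      proof (rule order_trans[OF sum_abs sum_mono])
        fix i
        have "\<bar>y\<bar> ^ i \<le> \<bar>R\<bar> ^ i" using y by (intro power_mono) auto
        then show "\<bar>(coeff (P n) i - coeff p i) * y ^ i\<bar> \<le> \<bar>coeff (P n) i - coeff p i\<bar> * \<bar>R\<bar> ^ i"
          by (simp add: abs_mult power_abs mult_left_mono)
      qed
      finally show "\<bar>poly (P n) y - poly p y\<bar> < e" using elim by simp
    qed
  qed
qed

lemma tendsto_poly_div_power_coeffwise:
  fixes P :: "'a \<Rightarrow> real poly"
  assumes deg: "eventually (\<lambda>n. degree (P n) \<le> d) F"
    and conv: "\<And>i. ((\<lambda>n. coeff (P n) i) \<longlongrightarrow> coeff p i) F" and x: "filterlim x at_top F"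
  shows "((\<lambda>n. poly (P n) (x n) / x n ^ d) \<longlongrightarrow> coeff p d) F"
proof -
  have "((\<lambda>n. \<Sum>i\<le>d. coeff (P n) i * inverse (x n) ^ (d - i)) \<longlongrightarrow> (\<Sum>i\<le>d. coeff p i * 0 ^ (d - i))) F"
    by (intro tendsto_intros conv tendsto_inverse_0_at_top x)
  also have "(\<Sum>i\<le>d. coeff p i * 0 ^ (d - i)) = coeff p d"
    by (subst sum.mono_neutral_right[of "{..d}" "{d}"]) auto
  finally have lim: "((\<lambda>n. \<Sum>i\<le>d. coeff (P n) i * inverse (x n) ^ (d - i)) \<longlongrightarrow> coeff p d) F" .
  have "eventually (\<lambda>n. x n > 0) F" using x by (simp add: filterlim_at_top_dense)
  with deg have "eventually (\<lambda>n. (\<Sum>i\<le>d. coeff (P n) i * inverse (x n) ^ (d - i)) = poly (P n) (x n) / x n ^ d) F"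
  proof eventually_elim
    case (elim n)
    have "inverse (x n) ^ (d - i) = x n ^ i / x n ^ d" if "i \<le> d" for i
    proof -
      have "x n ^ d = x n ^ i * x n ^ (d - i)" using that by (simp flip: power_add)
      then show ?thesis using elim by (simp add: power_inverse field_simps)
    qed
    then show ?case using elim
      by (simp add: poly_eq_sum_atMost sum_divide_distrib)
  qed
  with lim show ?thesis by (rule Lim_transform_eventually)
qed

lemma eventually_poly_pos_at_top:
  fixes P :: "'a \<Rightarrow> real poly"
  assumes deg: "eventually (\<lambda>n. degree (P n) \<le> Suc d \<and> coeff (P n) (Suc d) = c) F" and "c > 0"
    and conv: "\<And>i. ((\<lambda>n. coeff (P n) i) \<longlongrightarrow> b i) F"
  obtains R where "eventually (\<lambda>n. \<forall>y\<ge>R. poly (P n) y > 0) F"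
proof
  define B where "B = (\<Sum>i\<le>d. \<bar>b i\<bar>) + 1"
  have "((\<lambda>n. \<Sum>i\<le>d. \<bar>coeff (P n) i\<bar>) \<longlongrightarrow> (\<Sum>i\<le>d. \<bar>b i\<bar>)) F"
    by (intro tendsto_intros conv)
  then have "eventually (\<lambda>n. (\<Sum>i\<le>d. \<bar>coeff (P n) i\<bar>) < B) F"
    unfolding B_def by (rule order_tendstoD) simp
  with deg show "eventually (\<lambda>n. \<forall>y\<ge>max 1 (B / c). poly (P n) y > 0) F"
  proof eventually_elim
    case (elim n)
    show ?case
    proof (intro allI impI)
      fix y assume "max 1 (B / c) \<le> y"
      then have "B \<le> c * y" "1 \<le> y" using \<open>c > 0\<close> by (auto simp: field_simps)
      with elim show "poly (P n) y > 0"
        by (intro poly_pos_if_top_coeff_dominates[of _ d]) auto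
    qed
  qed
qed

lemma eventually_poly_pos_from:
  fixes P :: "'a \<Rightarrow> real poly"
  assumes deg: "eventually (\<lambda>n. degree (P n) \<le> Suc d \<and> coeff (P n) (Suc d) = coeff p (Suc d)) F"
    and "degree p \<le> Suc d" and "coeff p (Suc d) > 0"
    and conv: "\<And>i. ((\<lambda>n. coeff (P n) i) \<longlongrightarrow> coeff p i) F"
    and pos: "\<And>y. a \<le> y \<Longrightarrow> poly p y > 0"
  shows "eventually (\<lambda>n. \<forall>y\<ge>a. poly (P n) y > 0) F"
proof -
  obtain R where large: "eventually (\<lambda>n. \<forall>y\<ge>R. poly (P n) y > 0) F"
    using eventually_poly_pos_at_top[OF deg \<open>coeff p (Suc d) > 0\<close> conv] .
  define R' where "R' = max a R"
  have "continuous_on {a..R'} (poly p)" by (auto intro: continuous_intros)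
  then obtain s where s: "s \<in> {a..R'}" and s_min: "\<And>y. y \<in> {a..R'} \<Longrightarrow> poly p s \<le> poly p y"
    using continuous_attains_inf[of "{a..R'}" "poly p"] unfolding R'_def by auto
  have "poly p s > 0" using s pos by auto
  with deg \<open>degree p \<le> Suc d\<close> conv
  have "eventually (\<lambda>n. \<forall>y. \<bar>y\<bar> \<le> \<bar>a\<bar> + \<bar>R'\<bar> \<longrightarrow> \<bar>poly (P n) y - poly p y\<bar> < poly p s) F"
    by (intro eventually_uniform_poly_coeffwise[of _ "Suc d"]) (auto elim: eventually_mono)
  with large show ?thesis
  proof eventually_elim
    case (elim n)
    show ?case
    proof (intro allI impI)
      fix y assume "a \<le> y"
      show "poly (P n) y > 0"
      proof (cases "R \<le> y")
        case False
        with \<open>a \<le> y\<close> have "y \<in> {a..R'}" unfolding R'_def by simp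
        then have "\<bar>poly (P n) y - poly p y\<bar> < poly p s" "poly p s \<le> poly p y"
          using elim s_min by auto
        then show ?thesis by linarith
      qed (use elim in auto)
    qed
  qed
qed

lemma eventually_root_near_simple_root:
  fixes P :: "'a \<Rightarrow> real poly"
  assumes deg: "eventually (\<lambda>n. degree (P n) \<le> d) F" "degree p \<le> d"
    and conv: "\<And>i. ((\<lambda>n. coeff (P n) i) \<longlongrightarrow> coeff p i) F"
    and root: "poly p x0 = 0" and simple: "poly (pderiv p) x0 > 0" and "e > 0"
  shows "eventually (\<lambda>n. \<exists>z. \<bar>z - x0\<bar> < e \<and> poly (P n) z = 0) F"
proof -
  obtain d1 where "d1 > 0" and d1: "\<And>h. 0 < h \<Longrightarrow> h < d1 \<Longrightarrow> poly p (x0 - h) < poly p x0"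
    using DERIV_pos_inc_left[OF poly_DERIV simple] by blast
  obtain d2 where "d2 > 0" and d2: "\<And>h. 0 < h \<Longrightarrow> h < d2 \<Longrightarrow> poly p x0 < poly p (x0 + h)"
    using DERIV_pos_inc_right[OF poly_DERIV simple] by blast
  define h where "h = Min {d1 / 2, d2 / 2, e / 2}"
  have h: "0 < h" "h < d1" "h < d2" "h < e"
    using \<open>d1 > 0\<close> \<open>d2 > 0\<close> \<open>e > 0\<close> unfolding h_def by auto
  have "((\<lambda>n. poly (P n) (x0 - h)) \<longlongrightarrow> poly p (x0 - h)) F"
    and "((\<lambda>n. poly (P n) (x0 + h)) \<longlongrightarrow> poly p (x0 + h)) F"
    using deg conv by (intro tendsto_poly_coeffwise tendsto_const; blast)+
  moreover have "poly p (x0 - h) < 0" "poly p (x0 + h) > 0" using d1 d2 h root by auto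
  ultimately have "eventually (\<lambda>n. poly (P n) (x0 - h) < 0) F" "eventually (\<lambda>n. poly (P n) (x0 + h) > 0) F"
    by (auto dest: order_tendstoD)
  then show ?thesis
  proof eventually_elim
    case (elim n)
    then obtain z where "x0 - h < z" "z < x0 + h" "poly (P n) z = 0"
      using poly_IVT_pos[of "x0 - h" "x0 + h"] h by auto
    with h show ?case by (intro exI[of _ z]) auto
  qed
qed

lemma tendsto_Max_roots:
  fixes P :: "'a \<Rightarrow> real poly"
  assumes deg: "eventually (\<lambda>n. degree (P n) \<le> Suc d \<and> coeff (P n) (Suc d) = coeff p (Suc d)) F"
    and deg_p: "degree p \<le> Suc d" and top: "coeff p (Suc d) > 0"
    and conv: "\<And>i. ((\<lambda>n. coeff (P n) i) \<longlongrightarrow> coeff p i) F"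
    and root: "poly p x0 = 0" and max_root: "\<And>y. poly p y = 0 \<Longrightarrow> y \<le> x0"
    and simple: "poly (pderiv p) x0 \<noteq> 0"
  shows "eventually (\<lambda>n. {y. poly (P n) y = 0} \<noteq> {}) F"
    and "((\<lambda>n. Max {y. poly (P n) y = 0}) \<longlongrightarrow> x0) F"
proof -
  have "degree p = Suc d" using deg_p top by (intro antisym le_degree) auto
  then have pos: "\<And>y. x0 < y \<Longrightarrow> poly p y > 0"
    using top max_root by (intro poly_pos_right_of_roots) auto
  then have "poly (pderiv p) x0 > 0"
    using pderiv_nonneg_at_max_root[OF root] simple by force
  from deg have deg': "eventually (\<lambda>n. degree (P n) \<le> Suc d) F" by (auto elim: eventually_mono)
  have near: "eventually (\<lambda>n. \<exists>z. \<bar>z - x0\<bar> < e \<and> poly (P n) z = 0) F" if "e > 0" for e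
    using deg' deg_p conv root \<open>poly (pderiv p) x0 > 0\<close> that by (rule eventually_root_near_simple_root)
  have right: "eventually (\<lambda>n. \<forall>y\<ge>x0 + e. poly (P n) y > 0) F" if "e > 0" for e
    using deg deg_p top conv by (rule eventually_poly_pos_from) (use pos that in auto)
  show "eventually (\<lambda>n. {y. poly (P n) y = 0} \<noteq> {}) F"
    using near[of 1] by (auto elim: eventually_mono)
  show "((\<lambda>n. Max {y. poly (P n) y = 0}) \<longlongrightarrow> x0) F"
  proof (rule tendstoI)
    fix e :: real assume "e > 0"
    from near[OF this] right[OF this] deg show "eventually (\<lambda>n. dist (Max {y. poly (P n) y = 0}) x0 < e) F"
    proof eventually_elim
      case (elim n)
      then obtain z where z: "\<bar>z - x0\<bar> < e" "poly (P n) z = 0" by blast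
      have "P n \<noteq> 0" using elim top by auto
      then have fin: "finite {y. poly (P n) y = 0}" by (rule poly_roots_finite)
      have "z \<le> Max {y. poly (P n) y = 0}" using Max_ge[OF fin] z by simp
      moreover have "poly (P n) (Max {y. poly (P n) y = 0}) = 0"
        using Max_in[OF fin] z by auto
      then have "Max {y. poly (P n) y = 0} < x0 + e" using elim by (metis less_irrefl not_le)
      ultimately show ?case using z by (simp add: dist_real_def)
    qed
  qed
qed

lemma tendsto_poly_at_Max_critical_point:
  fixes Q :: "'a \<Rightarrow> real poly"
  assumes deg: "eventually (\<lambda>n. degree (Q n) \<le> Suc (Suc d) \<and> coeff (Q n) (Suc (Suc d)) = coeff h (Suc (Suc d))) F"
    and deg_h: "degree h \<le> Suc (Suc d)" and top: "coeff h (Suc (Suc d)) > 0"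
    and conv: "\<And>i. ((\<lambda>n. coeff (Q n) i) \<longlongrightarrow> coeff h i) F"
    and crit: "poly (pderiv h) x0 = 0" "\<And>y. poly (pderiv h) y = 0 \<Longrightarrow> y \<le> x0"
    and simple: "poly (pderiv (pderiv h)) x0 \<noteq> 0"
  shows "eventually (\<lambda>n. {y. poly (pderiv (Q n)) y = 0} \<noteq> {}) F"
    and "((\<lambda>n. poly (Q n) (Max {y. poly (pderiv (Q n)) y = 0})) \<longlongrightarrow> poly h x0) F"
proof -
  have deg': "eventually (\<lambda>n. degree (pderiv (Q n)) \<le> Suc d \<and> coeff (pderiv (Q n)) (Suc d) = coeff (pderiv h) (Suc d)) F"
    using deg by eventually_elim (auto simp: degree_pderiv coeff_pderiv)
  have deg_h': "degree (pderiv h) \<le> Suc d" "coeff (pderiv h) (Suc d) > 0"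
    using deg_h top by (auto simp: degree_pderiv coeff_pderiv)
  have conv': "\<And>i. ((\<lambda>n. coeff (pderiv (Q n)) i) \<longlongrightarrow> coeff (pderiv h) i) F"
    unfolding coeff_pderiv by (intro tendsto_intros conv)
  note Max_roots = tendsto_Max_roots[OF deg' deg_h' conv' crit simple]
  show "eventually (\<lambda>n. {y. poly (pderiv (Q n)) y = 0} \<noteq> {}) F"
    by (rule Max_roots(1))
  show "((\<lambda>n. poly (Q n) (Max {y. poly (pderiv (Q n)) y = 0})) \<longlongrightarrow> poly h x0) F"
    using deg deg_h conv Max_roots(2) by (intro tendsto_poly_coeffwise[of _ "Suc (Suc d)"]) (auto elim: eventually_mono)
qed

lemma tendsto_downward_recursion:
  fixes a :: "'a \<Rightarrow> nat \<Rightarrow> real"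
  assumes top: "\<And>i. m \<le> i \<Longrightarrow> ((\<lambda>n. a n i) \<longlongrightarrow> b i) F"
    and rec: "\<And>i. i < m \<Longrightarrow> eventually (\<lambda>n. a n i = r n i * a n (Suc (Suc i))) F"
    and r: "\<And>i. i < m \<Longrightarrow> ((\<lambda>n. r n i) \<longlongrightarrow> \<rho> i) F"
    and b: "\<And>i. i < m \<Longrightarrow> b i = \<rho> i * b (Suc (Suc i))"
  shows "((\<lambda>n. a n i) \<longlongrightarrow> b i) F"
proof (induction "m - i" arbitrary: i rule: less_induct)
  case less
  show ?case
  proof (cases "m \<le> i")
    case False
    then have "((\<lambda>n. r n i * a n (Suc (Suc i))) \<longlongrightarrow> \<rho> i * b (Suc (Suc i))) F"
      by (intro tendsto_mult r less) auto
    with False show ?thesis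
      using rec[of i] b[of i] by (simp add: tendsto_cong)
  qed (rule top)
qed

section \<open>Hermite polynomials\<close>

lemma hermite_pderiv: "pderiv (hermite (Suc n)) = smult (2 * real (Suc n)) (hermite n)"
proof (induction n rule: hermite.induct)
  case (3 n)
  let ?H = hermite and ?k = "real (Suc (Suc n))"
  have "pderiv (?H (Suc (Suc (Suc n))))
      = [:0, 2:] * pderiv (?H (Suc (Suc n))) + smult 2 (?H (Suc (Suc n))) - smult (2 * ?k) (pderiv (?H (Suc n)))"
    unfolding hermite.simps(3)[of "Suc n"]
    by (simp add: pderiv_mult pderiv_diff pderiv_smult pderiv_pCons algebra_simps del: hermite.simps)
  also have "\<dots> = smult (2 * ?k) ([:0, 2:] * ?H (Suc n) - smult (2 * real (Suc n)) (?H n)) + smult 2 (?H (Suc (Suc n)))"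
    using 3 by (simp add: algebra_simps smult_diff_right del: hermite.simps)
  also have "\<dots> = smult (2 * real (Suc (Suc (Suc n)))) (?H (Suc (Suc n)))"
    unfolding hermite.simps(3)[of n, symmetric] by (simp add: smult_add_left[symmetric] del: hermite.simps)
  finally show ?case .
qed (simp_all add: pderiv_pCons)

lemma hermite_ode:
  "pderiv (pderiv (hermite n)) - [:0, 2:] * pderiv (hermite n) + smult (2 * real n) (hermite n) = 0"
proof (cases n rule: hermite.cases)
  case (3 k)
  have d1: "pderiv (hermite n) = smult (2 * real n) (hermite (Suc k))"
    using 3 hermite_pderiv[of "Suc k"] by (simp del: hermite.simps)
  have d2: "pderiv (hermite (Suc k)) = smult (2 * real (Suc k)) (hermite k)"
    by (rule hermite_pderiv)
  have rec: "hermite n = [:0, 2:] * hermite (Suc k) - smult (2 * real (Suc k)) (hermite k)"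
    using 3 by simp
  show ?thesis
    unfolding d1 pderiv_smult d2
    by (subst rec) (simp add: algebra_simps smult_diff_right del: hermite.simps)
qed (simp_all add: pderiv_pCons)

lemma coeff_hermite_rec:
  "real (Suc i) * real (Suc (Suc i)) * coeff (hermite n) (Suc (Suc i))
     = 2 * (real i - real n) * coeff (hermite n) i"
proof -
  have "coeff (pderiv (pderiv (hermite n))) i - coeff ([:0, 2:] * pderiv (hermite n)) i
      + 2 * real n * coeff (hermite n) i = 0"
    using arg_cong[OF hermite_ode, of "\<lambda>p. coeff p i"] by simp
  moreover have "coeff ([:0, 2:] * pderiv (hermite n)) i = 2 * real i * coeff (hermite n) i"
    by (cases i) (simp_all add: coeff_linear_mult coeff_pderiv)
  ultimately show ?thesis by (simp add: coeff_pderiv algebra_simps)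
qed

lemma hermite_no_common_root: "poly (hermite n) x = 0 \<Longrightarrow> poly (hermite (Suc n)) x \<noteq> 0"
proof (induction n)
  case (Suc n)
  have "poly (hermite (Suc (Suc n))) x = 2 * x * poly (hermite (Suc n)) x - 2 * real (Suc n) * poly (hermite n) x"
    by simp
  with Suc show ?case by (auto simp del: hermite.simps)
qed simp

lemma coeff_hermite_above: "n < i \<Longrightarrow> coeff (hermite n) i = 0"
proof (induction n arbitrary: i rule: hermite.induct)
  case (3 n)
  then obtain j where "i = Suc j" by (cases i) auto
  with 3 show ?case by (simp add: coeff_linear_mult del: hermite.simps) (simp add: 3)
qed (auto simp: coeff_pCons split: nat.splits)

lemma coeff_hermite_self: "coeff (hermite n) n = 2 ^ n"
proof (induction n rule: hermite.induct)
  case (3 n)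
  then show ?case
    by (simp only: hermite.simps(3)) (simp add: coeff_linear_mult coeff_hermite_above del: hermite.simps)
qed simp_all

lemma degree_hermite: "degree (hermite n) = n"
  by (intro antisym degree_le le_degree) (simp_all add: coeff_hermite_above coeff_hermite_self)

lemma lead_coeff_hermite: "lead_coeff (hermite n) = 2 ^ n"
  by (simp add: degree_hermite coeff_hermite_self)

lemma hermite_has_root: "0 < n \<Longrightarrow> \<exists>x. poly (hermite n) x = 0"
proof (induction n rule: nat_induct_non_zero)
  case 1
  show ?case by (intro exI[of _ 0]) simp
next
  case (Suc n)
  then obtain j where n: "n = Suc j" by (cases n) auto
  have "hermite n \<noteq> 0" using lead_coeff_hermite[of n] by auto
  then have fin: "finite {x. poly (hermite n) x = 0}" by (rule poly_roots_finite)
  define r where "r = Max {x. poly (hermite n) x = 0}"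
  have r: "poly (hermite n) r = 0" "\<And>y. poly (hermite n) y = 0 \<Longrightarrow> y \<le> r"
    using Max_in[OF fin] Max_ge[OF fin] Suc.IH unfolding r_def by auto
  have pos: "\<And>y. r < y \<Longrightarrow> poly (hermite n) y > 0"
    using r lead_coeff_hermite[of n] by (intro poly_pos_right_of_roots) auto
  have "poly (pderiv (hermite n)) r \<noteq> 0"
    using hermite_no_common_root[of j r] r n hermite_pderiv[of j] by auto
  then have "poly (pderiv (hermite n)) r > 0"
    using pderiv_nonneg_at_max_root[OF r(1) pos] by simp
  moreover have "poly (hermite (Suc n)) r = - poly (pderiv (hermite n)) r"
    using r(1) n hermite_pderiv[of j] by simp
  ultimately show ?case
    using poly_root_above_negative[of "hermite (Suc n)" r] lead_coeff_hermite by auto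
qed

lemma hermite_xprime_critical:
  assumes "2 \<le> m"
  shows "poly (pderiv (hermite m)) (hermite_xprime m) = 0"
    and "\<And>y. poly (pderiv (hermite m)) y = 0 \<Longrightarrow> y \<le> hermite_xprime m"
    and "poly (pderiv (pderiv (hermite m))) (hermite_xprime m) \<noteq> 0"
proof -
  obtain j where m: "m = Suc (Suc j)" using assms by (metis add_2_eq_Suc le_Suc_ex)
  have crit: "{y. poly (pderiv (hermite m)) y = 0} = {y. poly (hermite (Suc j)) y = 0}"
    using m hermite_pderiv[of "Suc j"] by (simp del: hermite.simps)
  have "hermite (Suc j) \<noteq> 0" using lead_coeff_hermite[of "Suc j"] by auto
  then have fin: "finite {y. poly (hermite (Suc j)) y = 0}" by (rule poly_roots_finite)
  have ne: "{y. poly (hermite (Suc j)) y = 0} \<noteq> {}" using hermite_has_root[of "Suc j"] by auto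
  show root: "poly (pderiv (hermite m)) (hermite_xprime m) = 0"
    using Max_in[OF fin ne] crit unfolding hermite_xprime_def by auto
  show "\<And>y. poly (pderiv (hermite m)) y = 0 \<Longrightarrow> y \<le> hermite_xprime m"
    using Max_ge[OF fin] crit unfolding hermite_xprime_def by auto
  have "poly (hermite j) (hermite_xprime m) \<noteq> 0"
    using root hermite_no_common_root[of j] crit by blast
  then show "poly (pderiv (pderiv (hermite m))) (hermite_xprime m) \<noteq> 0"
    using m by (simp add: hermite_pderiv pderiv_smult del: hermite.simps)
qed

section \<open>Chebyshev polynomials\<close>

lemma chebT_cos: "poly (chebT n) (cos t) = cos (real n * t)"
proof (induction n rule: chebT.induct)
  case (3 n)
  have "cos (real (Suc (Suc n)) * t) = 2 * cos t * cos (real (Suc n) * t) - cos (real n * t)"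
    using cos_add[of "real (Suc n) * t" t] cos_diff[of "real (Suc n) * t" t]
    by (simp add: algebra_simps)
  with 3 show ?case by simp
qed simp_all

lemma chebT_pderiv_cos: "poly (pderiv (chebT n)) (cos t) * sin t = real n * sin (real n * t)"
proof -
  have "((\<lambda>t. poly (chebT n) (cos t)) has_real_derivative poly (pderiv (chebT n)) (cos t) * - sin t) (at t)"
    by (rule DERIV_chain2[OF poly_DERIV DERIV_cos])
  moreover have "((\<lambda>t. poly (chebT n) (cos t)) has_real_derivative - sin (real n * t) * real n) (at t)"
    unfolding chebT_cos by (auto intro!: derivative_eq_intros)
  ultimately show ?thesis by (metis DERIV_unique mult.commute mult_minus_right neg_equal_iff_equal)
qed

lemma chebT_pderiv2_cos:
  "poly (pderiv (pderiv (chebT n))) (cos t) * (sin t)\<^sup>2 - poly (pderiv (chebT n)) (cos t) * cos t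
     = - (real n ^ 2 * cos (real n * t))"
proof -
  let ?T' = "pderiv (chebT n)"
  have "((\<lambda>t. poly ?T' (cos t) * sin t) has_real_derivative
      poly (pderiv ?T') (cos t) * - sin t * sin t + poly ?T' (cos t) * cos t) (at t)"
    by (auto intro!: derivative_eq_intros DERIV_chain2[OF poly_DERIV])
  moreover have "((\<lambda>t. poly ?T' (cos t) * sin t) has_real_derivative real n * (cos (real n * t) * real n)) (at t)"
    unfolding chebT_pderiv_cos by (auto intro!: derivative_eq_intros)
  ultimately show ?thesis
    by (auto dest: DERIV_unique simp: power2_eq_square algebra_simps)
qed

lemma chebT_ode:
  "[:1, 0, -1:] * pderiv (pderiv (chebT n)) - [:0, 1:] * pderiv (chebT n) + smult (real n ^ 2) (chebT n) = 0"
proof (rule poly_eq_0_if_zero_on_cos)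
  fix t
  show "poly ([:1, 0, -1:] * pderiv (pderiv (chebT n)) - [:0, 1:] * pderiv (chebT n)
      + smult (real n ^ 2) (chebT n)) (cos t) = 0"
    using chebT_pderiv2_cos[of n t, unfolded sin_squared_eq] by (simp add: chebT_cos algebra_simps power2_eq_square)
qed

lemma coeff_chebT_above: "n < i \<Longrightarrow> coeff (chebT n) i = 0"
proof (induction n arbitrary: i rule: chebT.induct)
  case (3 n)
  then obtain j where "i = Suc j" by (cases i) auto
  with 3 show ?case by (simp add: coeff_linear_mult del: chebT.simps) (simp add: 3)
qed (auto simp: coeff_pCons split: nat.splits)

lemma coeff_chebT_self: "coeff (chebT (Suc n)) (Suc n) = 2 ^ n"
proof (induction n rule: nat_less_induct)
  case (1 n)
  show ?case
  proof (cases n)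
    case (Suc j)
    with 1 show ?thesis
      by (simp only: chebT.simps(3)) (simp add: coeff_linear_mult coeff_chebT_above del: chebT.simps)
  qed simp
qed

lemma coeff_chebT_rec:
  "real (Suc i) * real (Suc (Suc i)) * coeff (chebT n) (Suc (Suc i)) = (real i ^ 2 - real n ^ 2) * coeff (chebT n) i"
proof -
  let ?T = "chebT n"
  have x2: "[:1, 0, -1:] * p = p - [:0, 1:] * ([:0, 1:] * p)" for p :: "real poly"
    by (simp add: algebra_simps)
  have "coeff ([:1, 0, -1:] * pderiv (pderiv ?T) - [:0, 1:] * pderiv ?T + smult (real n ^ 2) ?T) i = 0"
    by (simp only: chebT_ode coeff_0)
  then have "coeff (pderiv (pderiv ?T)) i - coeff ([:0, 1:] * ([:0, 1:] * pderiv (pderiv ?T))) i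
      - coeff ([:0, 1:] * pderiv ?T) i + real n ^ 2 * coeff ?T i = 0"
    by (simp only: x2 coeff_add coeff_diff coeff_smult)
  moreover have "coeff ([:0, 1:] * ([:0, 1:] * pderiv (pderiv ?T))) i = real i * (real i - 1) * coeff ?T i"
    by (cases i; cases "i - 1") (simp_all add: coeff_linear_mult coeff_pderiv algebra_simps)
  moreover have "coeff ([:0, 1:] * pderiv ?T) i = real i * coeff ?T i"
    by (cases i) (simp_all add: coeff_linear_mult coeff_pderiv)
  ultimately show ?thesis by (simp add: coeff_pderiv algebra_simps power2_eq_square)
qed

lemma coeff_higher_pderiv_chebT_rec:
  "real (Suc i) * real (Suc (Suc i)) * coeff ((pderiv ^^ k) (chebT n)) (Suc (Suc i))
     = ((real i + real k) ^ 2 - real n ^ 2) * coeff ((pderiv ^^ k) (chebT n)) i"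
proof -
  let ?t = "coeff (chebT n)" and ?q = "\<lambda>i. real (Suc i) * real (Suc (Suc i))"
  have f1: "fact (Suc (Suc (i + k))) = ?q (i + k) * (fact (i + k) :: real)"
    and f2: "fact (Suc (Suc i)) = ?q i * (fact i :: real)"
    by (simp_all add: algebra_simps del: of_nat_Suc)
  have "?q i * coeff ((pderiv ^^ k) (chebT n)) (Suc (Suc i))
      = ?q i * (fact (Suc (Suc (i + k))) / fact (Suc (Suc i)) * ?t (Suc (Suc (i + k))))"
    by (simp add: coeff_higher_pderiv_fact)
  also have "\<dots> = fact (i + k) / fact i * (?q (i + k) * ?t (Suc (Suc (i + k))))"
    unfolding f1 f2 by (simp add: field_simps del: of_nat_Suc)
  also have "\<dots> = ((real i + real k) ^ 2 - real n ^ 2) * coeff ((pderiv ^^ k) (chebT n)) i"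
    unfolding coeff_chebT_rec by (simp add: coeff_higher_pderiv_fact)
  finally show ?thesis .
qed

section \<open>Rescaled derivatives of Chebyshev polynomials\<close>

text \<open>For m < n the coefficient at m is the leading coefficient of T_n^(n-m); for n < m it vanishes
  and the definition degenerates to 0.\<close>

definition cheb_rescaled :: "nat \<Rightarrow> nat \<Rightarrow> real poly" where
  "cheb_rescaled m n = smult (sqrt n ^ m / coeff (pder (n - m) (chebT n)) m)
     (pder (n - m) (chebT n) \<circ>\<^sub>p [:0, 1 / sqrt n:])"

lemma coeff_pder_chebT_above: "m < i \<Longrightarrow> coeff (pder (n - m) (chebT n)) i = 0"
  unfolding pder_def coeff_higher_pderiv_fact by (simp add: coeff_chebT_above)

lemma coeff_pder_chebT_pos: "m < n \<Longrightarrow> coeff (pder (n - m) (chebT n)) m > 0"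
  unfolding pder_def coeff_higher_pderiv_fact
  by (cases n) (simp_all add: coeff_chebT_self)

lemma coeff_cheb_rescaled:
  "coeff (cheb_rescaled m n) i
     = sqrt n ^ m / coeff (pder (n - m) (chebT n)) m * (1 / sqrt n) ^ i * coeff (pder (n - m) (chebT n)) i"
  by (simp add: cheb_rescaled_def coeff_pcompose_linear)

lemma cheb_rescaled_monic:
  assumes "m < n"
  shows "degree (cheb_rescaled m n) \<le> m" and "coeff (cheb_rescaled m n) m = 1"
  using coeff_pder_chebT_pos[OF assms] assms
  by (auto intro: degree_le simp: coeff_cheb_rescaled coeff_pder_chebT_above power_one_over field_simps)

lemma cheb_rescaled_coeff_rec:
  assumes "m < n" and "i < m"
  shows "coeff (cheb_rescaled m n) i
    = real (Suc i) * real (Suc (Suc i)) / (real i - real m) * (real n / (2 * real n + (real i - real m)))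
      * coeff (cheb_rescaled m n) (Suc (Suc i))"
proof -
  define p where "p = pder (n - m) (chebT n)"
  define a where "a = real i - real m"
  define s where "s = sqrt (real n)"
  have "a \<noteq> 0" "2 * real n + a > 0" using assms unfolding a_def by auto
  have s2: "s * s = real n" unfolding s_def by simp
  have "(real i + real (n - m)) ^ 2 - real n ^ 2 = a * (2 * real n + a)"
    using assms unfolding a_def by (simp add: of_nat_diff power2_eq_square algebra_simps)
  then have rec: "real (Suc i) * real (Suc (Suc i)) * coeff p (Suc (Suc i)) = a * (2 * real n + a) * coeff p i"
    using coeff_higher_pderiv_chebT_rec[of i "n - m" n] unfolding p_def pder_def by simp
  define B where "B = s ^ m / coeff p m * (1 / s) ^ i"
  have Q: "coeff (cheb_rescaled m n) i = B * coeff p i"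
    "coeff (cheb_rescaled m n) (Suc (Suc i)) = B / real n * coeff p (Suc (Suc i))"
    unfolding coeff_cheb_rescaled B_def p_def s_def by simp_all
  have frac: "q / a * (x / b) * (B / x * y) = B * (q * y) / (a * b)" if "x \<noteq> 0" for q a b x B y :: real
    using that by (simp add: field_simps)
  have "real (Suc i) * real (Suc (Suc i)) / a * (real n / (2 * real n + a)) * coeff (cheb_rescaled m n) (Suc (Suc i))
      = B * (real (Suc i) * real (Suc (Suc i)) * coeff p (Suc (Suc i))) / (a * (2 * real n + a))"
    unfolding Q using assms by (intro frac) simp
  also have "\<dots> = coeff (cheb_rescaled m n) i"
    unfolding rec Q using \<open>a \<noteq> 0\<close> \<open>2 * real n + a > 0\<close> by simp
  finally show ?thesis unfolding a_def by simp
qed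

lemma tendsto_coeff_cheb_rescaled:
  "(\<lambda>n. coeff (cheb_rescaled m n) i) \<longlonglongrightarrow> coeff (smult (1 / 2 ^ m) (hermite m)) i"
proof (rule tendsto_downward_recursion[where m = m])
  fix i assume "m \<le> i"
  have "eventually (\<lambda>n. coeff (cheb_rescaled m n) i = coeff (smult (1 / 2 ^ m) (hermite m)) i) sequentially"
    using eventually_gt_at_top[of m]
  proof eventually_elim
    case (elim n)
    then show ?case
      using \<open>m \<le> i\<close> cheb_rescaled_monic[OF elim] coeff_hermite_self[of m] coeff_hermite_above[of m i]
      by (cases "i = m") (auto simp: coeff_eq_0)
  qed
  then show "(\<lambda>n. coeff (cheb_rescaled m n) i) \<longlonglongrightarrow> coeff (smult (1 / 2 ^ m) (hermite m)) i"
    by (rule tendsto_eventually)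
next
  fix i assume "i < m"
  show "eventually (\<lambda>n. coeff (cheb_rescaled m n) i
      = real (Suc i) * real (Suc (Suc i)) / (real i - real m) * (real n / (2 * real n + (real i - real m)))
        * coeff (cheb_rescaled m n) (Suc (Suc i))) sequentially"
    using eventually_gt_at_top[of m] by eventually_elim (rule cheb_rescaled_coeff_rec[OF _ \<open>i < m\<close>])
  have "(\<lambda>n. real n / (2 * real n + (real i - real m))) \<longlonglongrightarrow> 1 / 2" by real_asymp
  then show "(\<lambda>n. real (Suc i) * real (Suc (Suc i)) / (real i - real m) * (real n / (2 * real n + (real i - real m))))
      \<longlonglongrightarrow> real (Suc i) * real (Suc (Suc i)) / (real i - real m) * (1 / 2)"
    by (rule tendsto_mult_left)
  show "coeff (smult (1 / 2 ^ m) (hermite m)) i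
      = real (Suc i) * real (Suc (Suc i)) / (real i - real m) * (1 / 2) * coeff (smult (1 / 2 ^ m) (hermite m)) (Suc (Suc i))"
  proof -
    have "real i - real m \<noteq> 0" using \<open>i < m\<close> by simp
    then have "coeff (hermite m) i
        = real (Suc i) * real (Suc (Suc i)) / (real i - real m) * (1 / 2) * coeff (hermite m) (Suc (Suc i))"
      using coeff_hermite_rec[of i m] by (simp add: field_simps)
    then show ?thesis by simp
  qed
qed

lemma cheb_tau_eq_rescaled:
  assumes "0 < m" "m < n" and crit: "{y. poly (pderiv (cheb_rescaled m n)) y = 0} \<noteq> {}"
  shows "real n powr (real m / 2) * cheb_tau n (n - m)
    = \<bar>poly (cheb_rescaled m n) (Max {y. poly (pderiv (cheb_rescaled m n)) y = 0})\<bar>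
      / (poly (cheb_rescaled m n) (sqrt n) / sqrt n ^ m)"
proof -
  define p where "p = pder (n - m) (chebT n)"
  define s where "s = sqrt (real n)"
  define A where "A = s ^ m / coeff p m"
  define \<omega> where "\<omega> = Max {x. poly (pderiv p) x = 0}"
  have "s > 0" "A > 0" "1 / s \<noteq> 0"
    using assms coeff_pder_chebT_pos[OF assms(2)] unfolding s_def A_def p_def by auto
  have Q: "cheb_rescaled m n = smult A (p \<circ>\<^sub>p [:0, 1 / s:])"
    unfolding cheb_rescaled_def A_def p_def s_def ..
  have poly_Q: "poly (cheb_rescaled m n) y = A * poly p (y / s)" for y
    unfolding Q by (simp add: poly_pcompose)
  have crit_Q: "{y. poly (pderiv (cheb_rescaled m n)) y = 0} = {y. poly (pderiv p \<circ>\<^sub>p [:0, 1 / s:]) y = 0}"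
    unfolding Q using \<open>s > 0\<close> \<open>A > 0\<close> by (simp add: pderiv_smult pderiv_pcompose pderiv_pCons)
  have "degree p = m"
    using coeff_pder_chebT_pos[OF assms(2)] coeff_pder_chebT_above[of m _ n]
    unfolding p_def by (intro antisym degree_le le_degree) auto
  then have "pderiv p \<noteq> 0" using \<open>0 < m\<close> by (simp add: pderiv_eq_0_iff)
  moreover have "{x. poly (pderiv p) x = 0} \<noteq> {}"
    using crit \<open>s > 0\<close> unfolding crit_Q roots_pcompose_scale[of "1 / s" "pderiv p", OF \<open>1 / s \<noteq> 0\<close>] by auto
  ultimately have "Max {y. poly (pderiv (cheb_rescaled m n)) y = 0} = s * \<omega>"
    unfolding crit_Q \<omega>_def using Max_roots_pcompose_scale[of "1 / s"] \<open>s > 0\<close> by simp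
  moreover have "cheb_tau n (n - m) = \<bar>poly p \<omega>\<bar> / poly p 1"
    unfolding cheb_tau_def cheb_omega_def \<omega>_def p_def pder_def by simp
  moreover have "real n powr (real m / 2) = s ^ m"
    using assms unfolding s_def by (simp add: powr_half_sqrt_powr powr_realpow real_sqrt_power)
  ultimately show ?thesis
    using \<open>s > 0\<close> \<open>A > 0\<close> by (simp add: poly_Q s_def[symmetric] abs_mult)
qed

lemma eventually_cheb_rescaled_monic:
  "eventually (\<lambda>n. degree (cheb_rescaled m n) \<le> m \<and> coeff (cheb_rescaled m n) m = 1) sequentially"
  using eventually_gt_at_top[of m] by eventually_elim (simp add: cheb_rescaled_monic)

lemma tendsto_cheb_rescaled_sqrt:
  "(\<lambda>n. poly (cheb_rescaled m n) (sqrt n) / sqrt n ^ m) \<longlonglongrightarrow> 1"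
proof -
  have deg: "eventually (\<lambda>n. degree (cheb_rescaled m n) \<le> m) sequentially"
    using eventually_cheb_rescaled_monic[of m] by (auto elim: eventually_mono)
  have sqrt: "filterlim (\<lambda>n. sqrt (real n)) at_top sequentially" by real_asymp
  show ?thesis
    using tendsto_poly_div_power_coeffwise[OF deg tendsto_coeff_cheb_rescaled sqrt]
    by (simp add: coeff_hermite_self)
qed

lemma tendsto_cheb_rescaled_at_Max_critical_point:
  assumes "2 \<le> m"
  shows "eventually (\<lambda>n. {y. poly (pderiv (cheb_rescaled m n)) y = 0} \<noteq> {}) sequentially"
    and "(\<lambda>n. poly (cheb_rescaled m n) (Max {y. poly (pderiv (cheb_rescaled m n)) y = 0}))
           \<longlonglongrightarrow> poly (hermite m) (hermite_xprime m) / 2 ^ m"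
proof -
  define h where "h = smult (1 / 2 ^ m) (hermite m)"
  have m: "Suc (Suc (m - 2)) = m" using assms by simp
  have deg: "eventually (\<lambda>n. degree (cheb_rescaled m n) \<le> m \<and> coeff (cheb_rescaled m n) m = coeff h m) sequentially"
    using eventually_cheb_rescaled_monic by (simp add: h_def coeff_hermite_self)
  have h: "degree h \<le> m" "coeff h m > 0"
    by (simp_all add: h_def degree_hermite coeff_hermite_self)
  have xprime: "poly (pderiv h) (hermite_xprime m) = 0" "\<And>y. poly (pderiv h) y = 0 \<Longrightarrow> y \<le> hermite_xprime m"
    "poly (pderiv (pderiv h)) (hermite_xprime m) \<noteq> 0"
    using hermite_xprime_critical[OF assms] by (simp_all add: h_def pderiv_smult)
  note lim = tendsto_poly_at_Max_critical_point[where d = "m - 2", unfolded m,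
      OF deg h tendsto_coeff_cheb_rescaled[of m, folded h_def] xprime]
  show "eventually (\<lambda>n. {y. poly (pderiv (cheb_rescaled m n)) y = 0} \<noteq> {}) sequentially"
    by (rule lim(1))
  show "(\<lambda>n. poly (cheb_rescaled m n) (Max {y. poly (pderiv (cheb_rescaled m n)) y = 0}))
      \<longlonglongrightarrow> poly (hermite m) (hermite_xprime m) / 2 ^ m"
    using lim(2) by (simp add: h_def)
qed

theorem lemma6p4:
  fixes m :: nat
  assumes "m \<ge> 2"
  shows "(\<lambda>n. real n powr (real m / 2) * cheb_tau n (n - m))
           \<longlonglongrightarrow> \<bar>poly (hermite m) (hermite_xprime m)\<bar> / 2 ^ m"
proof -
  define crit where "crit n = {y. poly (pderiv (cheb_rescaled m n)) y = 0}" for n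
  have "(\<lambda>n. \<bar>poly (cheb_rescaled m n) (Max (crit n))\<bar> / (poly (cheb_rescaled m n) (sqrt n) / sqrt n ^ m))
      \<longlonglongrightarrow> \<bar>poly (hermite m) (hermite_xprime m) / 2 ^ m\<bar> / 1"
    using tendsto_cheb_rescaled_at_Max_critical_point(2)[OF assms] tendsto_cheb_rescaled_sqrt
    unfolding crit_def by (intro tendsto_intros) auto
  moreover have "eventually (\<lambda>n. \<bar>poly (cheb_rescaled m n) (Max (crit n))\<bar> / (poly (cheb_rescaled m n) (sqrt n) / sqrt n ^ m)
      = real n powr (real m / 2) * cheb_tau n (n - m)) sequentially"
    using tendsto_cheb_rescaled_at_Max_critical_point(1)[OF assms] eventually_gt_at_top[of m]
    by eventually_elim (use assms in \<open>simp add: cheb_tau_eq_rescaled crit_def\<close>)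
  ultimately show ?thesis
    by (simp add: Lim_transform_eventually)
qed

end
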